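(* For any $d,d'\in D$, the function $f:D'^2\to\mathbb{R}$ given by: for $x,y\in D$, $f(x,y)=0$ if $x=d$ or $y=d'$ and $f(x,y)=1$ otherwise; $f(d,0)=f(0,d')=f(0,0)=0$; $f(a,0)=\tfrac12$ for $a\in D\setminus\{d\}$; $f(0,b)=\tfrac12$ for $b\in D\setminus\{d'\}$ (the basic $k$-submodular relaxation of the soft version of $(x=d\lor y=d')$) is $k$-submodular representable.
   Context: $D=\{1,\dots,k\}$, $D'=\{0\}\cup D$. For a variable set $X$ and $v\in X$ let $X_v=\{v_i:i\in D\}$. An $(X,k)$-network is a directed network with nonnegative capacities $c$ on vertex set $\bigcup_{v\in X}X_v\cup\{s,t\}$; an $s$-$t$ cut $S$ has capacity the total capacity of edges leaving $S$. For $\phi:X\to D'$, $S_\phi=\{s\}\cup\{v_{\phi(v)}:\phi(v)\ne0\}$; the network represents $g$ if $c(S_\phi)=g(\phi)$ for all $\phi$. For an $s$-$t$ cut $S$, $\nu(S)=\{s\}\cup\{v_i:S\cap X_v=\{v_i\}\}$; the network is $k$-submodular if $c(S)\ge c(\nu(S))$ for every $s$-$t$ cut. A function of variables $X$ is $k$-submodular representable if some $k$-submodular $(X,k)$-network represents it. *)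

theory Defs
  imports Complex_Main
begin

datatype 'v node = Src | Snk | Vx 'v nat

definition dom_k :: "nat \<Rightarrow> nat set" where
  "dom_k k = {1..k}"

definition Xv :: "nat \<Rightarrow> 'v \<Rightarrow> 'v node set" where
  "Xv k v = {Vx v i | i. i \<in> dom_k k}"

definition net_vertices :: "'v set \<Rightarrow> nat \<Rightarrow> 'v node set" where
  "net_vertices X k = (\<Union>v\<in>X. Xv k v) \<union> {Src, Snk}"

definition is_network :: "'v set \<Rightarrow> nat \<Rightarrow> ('v node \<Rightarrow> 'v node \<Rightarrow> real) \<Rightarrow> bool" where
  "is_network X k c \<longleftrightarrow> (\<forall>u\<in>net_vertices X k. \<forall>w\<in>net_vertices X k. c u w \<ge> 0)"

definition is_st_cut :: "'v set \<Rightarrow> nat \<Rightarrow> 'v node set \<Rightarrow> bool" where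
  "is_st_cut X k S \<longleftrightarrow> S \<subseteq> net_vertices X k \<and> Src \<in> S \<and> Snk \<notin> S"

definition cut_cap :: "'v set \<Rightarrow> nat \<Rightarrow> ('v node \<Rightarrow> 'v node \<Rightarrow> real) \<Rightarrow> 'v node set \<Rightarrow> real" where
  "cut_cap X k c S = (\<Sum>u\<in>S. \<Sum>w\<in>net_vertices X k - S. c u w)"

definition S_phi :: "'v set \<Rightarrow> ('v \<Rightarrow> nat) \<Rightarrow> 'v node set" where
  "S_phi X \<phi> = {Src} \<union> {Vx v (\<phi> v) | v. v \<in> X \<and> \<phi> v \<noteq> 0}"

definition nu :: "'v set \<Rightarrow> nat \<Rightarrow> 'v node set \<Rightarrow> 'v node set" where
  "nu X k S = {Src} \<union> {Vx v i | v i. v \<in> X \<and> i \<in> dom_k k \<and> S \<inter> Xv k v = {Vx v i}}"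

definition assignments :: "'v set \<Rightarrow> nat \<Rightarrow> ('v \<Rightarrow> nat) set" where
  "assignments X k = {\<phi>. \<forall>v\<in>X. \<phi> v \<in> {0..k}}"

definition represents :: "'v set \<Rightarrow> nat \<Rightarrow> ('v node \<Rightarrow> 'v node \<Rightarrow> real) \<Rightarrow> (('v \<Rightarrow> nat) \<Rightarrow> real) \<Rightarrow> bool" where
  "represents X k c g \<longleftrightarrow> (\<forall>\<phi>\<in>assignments X k. cut_cap X k c (S_phi X \<phi>) = g \<phi>)"

definition k_submodular_network :: "'v set \<Rightarrow> nat \<Rightarrow> ('v node \<Rightarrow> 'v node \<Rightarrow> real) \<Rightarrow> bool" where
  "k_submodular_network X k c \<longleftrightarrow>
     (\<forall>S. is_st_cut X k S \<longrightarrow> cut_cap X k c S \<ge> cut_cap X k c (nu X k S))"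

definition k_submodular_representable :: "'v set \<Rightarrow> nat \<Rightarrow> (('v \<Rightarrow> nat) \<Rightarrow> real) \<Rightarrow> bool" where
  "k_submodular_representable X k g \<longleftrightarrow>
     (\<exists>c. is_network X k c \<and> k_submodular_network X k c \<and> represents X k c g)"

definition f22 :: "nat \<Rightarrow> nat \<Rightarrow> nat \<Rightarrow> nat \<Rightarrow> real" where
  "f22 d d' x y =
     (if x \<noteq> 0 \<and> y \<noteq> 0 then (if x = d \<or> y = d' then 0 else 1)
      else if x = 0 \<and> y = 0 then 0
      else if y = 0 then (if x = d then 0 else 1/2)
      else (if y = d' then 0 else 1/2))"

end

theory Submission
  imports Defs
begin

text \<open>Write x for the variable True and y for False. The network has an edge of capacity 1/2
  from x_a to y_d' for every a \<noteq> d and from y_b to x_d for every b \<noteq> d'. The capacity of a cut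
  only depends on its layers A = {a. x_a \<in> S} and B = {b. y_b \<in> S}: it is |A - {d}|/2 unless
  y_d' \<in> S, plus |B - {d'}|/2 unless x_d \<in> S. On the cut of an assignment this is f. Passing
  from S to \<nu>(S) replaces each layer by itself if it is a singleton and by the empty set
  otherwise; if both layers are singletons nothing changes, and otherwise at most one edge
  x_a \<rightarrow> y_d' (or symmetrically y_b \<rightarrow> x_d) leaves \<nu>(S), and S is cut by that edge or by an
  edge y_b \<rightarrow> x_d from a second element b of its y-layer.\<close>

definition edge_cap :: "'v node \<Rightarrow> 'v node \<Rightarrow> real \<Rightarrow> 'v node \<Rightarrow> 'v node \<Rightarrow> real" where
  "edge_cap p q x u w = (if u = p \<and> w = q then x else 0)"

definition layer :: "nat \<Rightarrow> 'v node set \<Rightarrow> 'v \<Rightarrow> nat set" where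
  "layer k S v = {i \<in> {1..k}. Vx v i \<in> S}"

lemma Xv_eq: "Xv k v = Vx v ` {1..k}"
  by (auto simp: Xv_def dom_k_def)

lemma Vx_mem_net_vertices: "Vx v i \<in> net_vertices X k \<longleftrightarrow> v \<in> X \<and> i \<in> {1..k}"
  by (auto simp: net_vertices_def Xv_def dom_k_def)

lemma finite_net_vertices: "finite X \<Longrightarrow> finite (net_vertices X k)"
  by (simp add: net_vertices_def Xv_eq)

lemma S_phi_subset_net_vertices:
  "\<phi> \<in> assignments X k \<Longrightarrow> S_phi X \<phi> \<subseteq> net_vertices X k"
  by (auto simp: S_phi_def assignments_def net_vertices_def Xv_def dom_k_def)

lemma nu_subset_net_vertices: "nu X k S \<subseteq> net_vertices X k"
  by (auto simp: nu_def net_vertices_def Xv_eq dom_k_def)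

lemma finite_layer [simp]: "finite (layer k S v)"
  by (simp add: layer_def)

lemma layer_S_phi: "v \<in> X \<Longrightarrow> \<phi> v \<le> k \<Longrightarrow> layer k (S_phi X \<phi>) v = {\<phi> v} - {0}"
  by (auto simp: layer_def S_phi_def)

lemma Xv_inter_eq_layer: "S \<inter> Xv k v = Vx v ` layer k S v"
  by (auto simp: layer_def Xv_eq)

lemma layer_nu:
  assumes "v \<in> X"
  shows "layer k (nu X k S) v = {i. layer k S v = {i}}"
proof -
  have "inj (Vx v)"
    by (simp add: inj_def)
  then have singleton_iff: "S \<inter> Xv k v = {Vx v i} \<longleftrightarrow> layer k S v = {i}" for i
    unfolding Xv_inter_eq_layer using inj_image_eq_iff[of "Vx v" _ "{i}"] by simp
  have mem_nu: "Vx v i \<in> nu X k S \<longleftrightarrow> i \<in> {1..k} \<and> S \<inter> Xv k v = {Vx v i}" for i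
    using assms by (auto simp: nu_def dom_k_def)
  have "layer k S v = {i} \<Longrightarrow> i \<in> {1..k}" for i
    by (auto simp: layer_def)
  then show ?thesis
    unfolding layer_def[of k "nu X k S"] mem_nu singleton_iff by blast
qed

lemma cut_cap_add:
  "cut_cap X k (\<lambda>u w. c u w + c' u w) S = cut_cap X k c S + cut_cap X k c' S"
  by (simp add: cut_cap_def sum.distrib)

lemma cut_cap_sum:
  "cut_cap X k (\<lambda>u w. \<Sum>i\<in>I. c i u w) S = (\<Sum>i\<in>I. cut_cap X k (c i) S)"
  unfolding cut_cap_def by (simp add: sum.swap[where A = I])

lemma cut_cap_edge:
  assumes "finite X" "S \<subseteq> net_vertices X k" "q \<in> net_vertices X k"
  shows "cut_cap X k (edge_cap p q x) S = (if p \<in> S \<and> q \<notin> S then x else 0)"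
proof -
  let ?T = "net_vertices X k - S"
  have "finite S" "finite ?T"
    using assms finite_net_vertices finite_subset by blast+
  have "cut_cap X k (edge_cap p q x) S = (\<Sum>u\<in>S. if u = p then \<Sum>w\<in>?T. if w = q then x else 0 else 0)"
    unfolding cut_cap_def edge_cap_def by (rule sum.cong) auto
  also have "\<dots> = (if p \<in> S \<and> q \<notin> S then x else 0)"
    using \<open>finite S\<close> \<open>finite ?T\<close> assms(3) by (simp add: sum.delta')
  finally show ?thesis .
qed

lemma cut_cap_fan:
  assumes "finite X" "S \<subseteq> net_vertices X k" "v \<in> X" "v' \<in> X" "d' \<in> {1..k}"
  shows "cut_cap X k (\<lambda>u w. \<Sum>a\<in>{1..k} - {d}. edge_cap (Vx v a) (Vx v' d') x u w) S
           = (if d' \<in> layer k S v' then 0 else x * card (layer k S v - {d}))"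
proof -
  let ?I = "{a \<in> {1..k} - {d}. Vx v a \<in> S \<and> Vx v' d' \<notin> S}"
  have "cut_cap X k (\<lambda>u w. \<Sum>a\<in>{1..k} - {d}. edge_cap (Vx v a) (Vx v' d') x u w) S
      = (\<Sum>a\<in>{1..k} - {d}. if Vx v a \<in> S \<and> Vx v' d' \<notin> S then x else 0)"
    using assms by (simp add: cut_cap_sum cut_cap_edge Vx_mem_net_vertices)
  also have "\<dots> = (\<Sum>a\<in>?I. x)"
    by (rule sum.inter_filter[symmetric]) simp
  also have "?I = (if d' \<in> layer k S v' then {} else layer k S v - {d})"
    using assms(5) by (auto simp: layer_def)
  finally show ?thesis
    by simp
qed

text \<open>The capacity cut on the edges x_a \<rightarrow> y_d' (a \<noteq> d) by a cut with layers A at x and B at y.\<close>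
definition fan_cut :: "nat \<Rightarrow> nat \<Rightarrow> nat set \<Rightarrow> nat set \<Rightarrow> real" where
  "fan_cut d d' A B = (if d' \<in> B then 0 else card (A - {d}) / 2)"

definition f22_network :: "nat \<Rightarrow> nat \<Rightarrow> nat \<Rightarrow> bool node \<Rightarrow> bool node \<Rightarrow> real" where
  "f22_network k d d' u w =
     (\<Sum>a\<in>{1..k} - {d}. edge_cap (Vx True a) (Vx False d') (1/2) u w)
   + (\<Sum>b\<in>{1..k} - {d'}. edge_cap (Vx False b) (Vx True d) (1/2) u w)"

lemma is_network_f22_network: "is_network UNIV k (f22_network k d d')"
  unfolding is_network_def f22_network_def edge_cap_def
  by (intro ballI add_nonneg_nonneg sum_nonneg) simp_all

lemma cut_cap_f22_network:
  assumes "S \<subseteq> net_vertices UNIV k" "d \<in> {1..k}" "d' \<in> {1..k}"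
  shows "cut_cap UNIV k (f22_network k d d') S
           = fan_cut d d' (layer k S True) (layer k S False)
           + fan_cut d' d (layer k S False) (layer k S True)"
  unfolding f22_network_def cut_cap_add
    cut_cap_fan[OF finite_UNIV assms(1) UNIV_I UNIV_I assms(3)]
    cut_cap_fan[OF finite_UNIV assms(1) UNIV_I UNIV_I assms(2)]
  by (simp add: fan_cut_def)

lemma f22_eq_fan_cut:
  assumes "d \<noteq> 0" "d' \<noteq> 0"
  shows "f22 d d' x y = fan_cut d d' ({x} - {0}) ({y} - {0}) + fan_cut d' d ({y} - {0}) ({x} - {0})"
  using assms by (auto simp: f22_def fan_cut_def)

lemma fan_cut_nonneg: "fan_cut d d' A B \<ge> 0"
  by (simp add: fan_cut_def)

lemma fan_cut_empty [simp]: "fan_cut d d' {} B = 0"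
  by (simp add: fan_cut_def)

lemma fan_cut_singleton_parts_le:
  assumes "finite B"
  shows "fan_cut d d' {i. A = {i}} {j. B = {j}} \<le> fan_cut d d' A B + fan_cut d' d B A"
proof (cases "fan_cut d d' {i. A = {i}} {j. B = {j}} = 0")
  case False
  then have "card ({i. A = {i}} - {d}) \<noteq> 0" and d'_notin: "d' \<notin> {j. B = {j}}"
    unfolding fan_cut_def by (simp_all split: if_splits)
  then have "{i. A = {i}} - {d} \<noteq> {}"
    by (metis card.empty)
  then obtain a where A: "A = {a}" "a \<noteq> d"
    by blast
  have lhs: "fan_cut d d' {i. A = {i}} {j. B = {j}} = 1/2"
    using A d'_notin by (auto simp: fan_cut_def)
  show ?thesis
  proof (cases "d' \<in> B")
    case True
    with d'_notin obtain b where "b \<in> B - {d'}"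
      by blast
    then have "1 \<le> card (B - {d'})"
      using \<open>finite B\<close> by (metis One_nat_def Suc_leI card_gt_0_iff empty_iff finite_Diff)
    then have "1/2 \<le> fan_cut d' d B A"
      using A by (simp add: fan_cut_def)
    then show ?thesis
      using lhs fan_cut_nonneg[of d d' A B] by linarith
  next
    case False
    then show ?thesis
      using A lhs fan_cut_nonneg[of d' d B A] by (simp add: fan_cut_def)
  qed
qed (simp add: fan_cut_nonneg add_nonneg_nonneg)

lemma fan_cut_singleton_parts_sum_le:
  assumes "finite A" "finite B"
  shows "fan_cut d d' {i. A = {i}} {j. B = {j}} + fan_cut d' d {j. B = {j}} {i. A = {i}}
           \<le> fan_cut d d' A B + fan_cut d' d B A"
proof -
  consider a b where "A = {a}" "B = {b}" | "{i. A = {i}} = {}" | "{j. B = {j}} = {}"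
    by blast
  then show ?thesis
  proof cases
    case 2
    then show ?thesis
      using fan_cut_singleton_parts_le[OF \<open>finite A\<close>, of d' d B] by simp
  next
    case 3
    then show ?thesis
      using fan_cut_singleton_parts_le[OF \<open>finite B\<close>, of d d' A] by simp
  qed simp
qed

theorem lemma22:
  fixes k d d' :: nat
  assumes "d \<in> {1..k}" and "d' \<in> {1..k}"
  shows "k_submodular_representable (UNIV :: bool set) k
           (\<lambda>\<phi>. f22 d d' (\<phi> True) (\<phi> False))"
  unfolding k_submodular_representable_def
proof (intro exI conjI)
  show "is_network UNIV k (f22_network k d d')"
    by (rule is_network_f22_network)
  show "represents UNIV k (f22_network k d d') (\<lambda>\<phi>. f22 d d' (\<phi> True) (\<phi> False))"
    unfolding represents_def
  proof
    fix \<phi> :: "bool \<Rightarrow> nat" assume \<phi>: "\<phi> \<in> assignments UNIV k"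
    then have "\<phi> v \<le> k" for v
      by (simp add: assignments_def)
    then show "cut_cap UNIV k (f22_network k d d') (S_phi UNIV \<phi>) = f22 d d' (\<phi> True) (\<phi> False)"
      using assms by (simp add: cut_cap_f22_network S_phi_subset_net_vertices[OF \<phi>]
          layer_S_phi f22_eq_fan_cut)
  qed
  show "k_submodular_network UNIV k (f22_network k d d')"
    unfolding k_submodular_network_def
  proof (intro allI impI)
    fix S :: "bool node set" assume "is_st_cut UNIV k S"
    then have "S \<subseteq> net_vertices UNIV k"
      by (simp add: is_st_cut_def)
    then show "cut_cap UNIV k (f22_network k d d') (nu UNIV k S) \<le> cut_cap UNIV k (f22_network k d d') S"
      using assms fan_cut_singleton_parts_sum_le
      by (simp add: cut_cap_f22_network nu_subset_net_vertices layer_nu)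
  qed
qed

end
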